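(* Let $n,k,l$ be nonnegative integers with $k+l\le n$, let $\alpha,\beta>-1$, set $\sigma=\alpha+\beta+1$, and for $i=k+l,\ldots,n$ and $h=k,\ldots,n-l$ define \[ c_{ih}=\frac{(\alpha+2l+1)_{i-k-l}}{(i-k-l)!}\binom{n}{h}^{-1}\binom{n-k-l}{h-k}\,Q_{i-k-l}(n-l-h;\,\alpha+2l,\,\beta+2k,\,n-k-l). \] Then for each fixed $i$ (and whenever the indices involved lie in the range $k\le h\le n-l$): \[ c_{i,n-l}=\frac{(\alpha+2l+1)_{i-k-l}}{(i-k-l)!}\binom{n}{l}^{-1}, \] \[ c_{i,n-l-1}=c_{i,n-l}\,\frac{(n-k-l)(l+1)}{n-l}\left[1-\frac{(k+l-i)(i+k+l+\sigma)}{(k+l-n)(\alpha+2l+1)}\right], \] and for $h=n-l-2,n-l-3,\ldots,k$, \[ c_{ih}=F_i(h)\,c_{i,h+1}+G(h)\,c_{i,h+2}, \] where \[ H(h)=\frac{(n-l-h-1)(h+k+\beta+2)}{(n+l+\alpha-h)(k-h-1)}, \] \[ F_i(h)=\frac{(n-h)(h+1-k)}{(n-l-h)(h+1)}\left[1-H(h)-\frac{(k+l-i)(i+k+l+\sigma)}{(n+l+\alpha-h)(k-h-1)}\right], \] \[ G(h)=\frac{(n-h-1)_2\,(h+1-k)_2}{(n-l-h-1)_2\,(h+1)_2}\,H(h). \]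
   Context: Pochhammer symbol: $(a)_0=1$, $(a)_j=a(a+1)\cdots(a+j-1)$. Hahn polynomials: for a nonnegative integer $N$, $a,b>-1$ and $m=0,1,\ldots,N$, $Q_m(x;a,b,N)=\sum_{j=0}^m\frac{(-m)_j(m+a+b+1)_j(-x)_j}{j!\,(a+1)_j\,(-N)_j}$. (The numbers $c_{ih}$ are the coefficients of the modified Jacobi polynomial $J_{i,k,l}^{(\alpha,\beta)}(x)=(1-x)^lx^kR^{(\alpha+2l,\beta+2k)}_{i-k-l}(x)$ in the Bernstein basis $B^n_h(x)=\binom nh x^h(1-x)^{n-h}$, $h=k,\ldots,n-l$, where $R^{(a,b)}_m(x)=\frac{(a+1)_m}{m!}\sum_{j=0}^m\frac{(-m)_j(m+a+b+1)_j}{j!(a+1)_j}(1-x)^j$.) *)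

theory Defs
  imports Complex_Main
begin

definition hahnQ :: "nat \<Rightarrow> real \<Rightarrow> real \<Rightarrow> real \<Rightarrow> nat \<Rightarrow> real" where
  "hahnQ m x a b N =
     (\<Sum>j\<le>m. pochhammer (- real m) j * pochhammer (real m + a + b + 1) j * pochhammer (- x) j
              / (fact j * pochhammer (a + 1) j * pochhammer (- real N) j))"

text \<open>The coefficients c_{ih}; meaningful for k+l \<le> i \<le> n and k \<le> h \<le> n-l.\<close>
definition cc :: "real \<Rightarrow> real \<Rightarrow> nat \<Rightarrow> nat \<Rightarrow> nat \<Rightarrow> nat \<Rightarrow> nat \<Rightarrow> real" where
  "cc \<alpha> \<beta> n k l i h =
     pochhammer (\<alpha> + 2 * real l + 1) (i - k - l) / fact (i - k - l)
     * (1 / real (n choose h)) * real ((n - k - l) choose (h - k))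
     * hahnQ (i - k - l) (real (n - l - h)) (\<alpha> + 2 * real l) (\<beta> + 2 * real k) (n - k - l)"

definition HH :: "real \<Rightarrow> real \<Rightarrow> nat \<Rightarrow> nat \<Rightarrow> nat \<Rightarrow> nat \<Rightarrow> real" where
  "HH \<alpha> \<beta> n k l h =
     (real n - real l - real h - 1) * (real h + real k + \<beta> + 2)
     / ((real n + real l + \<alpha> - real h) * (real k - real h - 1))"

definition FF :: "real \<Rightarrow> real \<Rightarrow> nat \<Rightarrow> nat \<Rightarrow> nat \<Rightarrow> nat \<Rightarrow> nat \<Rightarrow> real" where
  "FF \<alpha> \<beta> n k l i h =
     (real n - real h) * (real h + 1 - real k) / ((real n - real l - real h) * (real h + 1))
     * (1 - HH \<alpha> \<beta> n k l h
          - (real k + real l - real i) * (real i + real k + real l + (\<alpha> + \<beta> + 1))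
            / ((real n + real l + \<alpha> - real h) * (real k - real h - 1)))"

definition GG :: "real \<Rightarrow> real \<Rightarrow> nat \<Rightarrow> nat \<Rightarrow> nat \<Rightarrow> nat \<Rightarrow> real" where
  "GG \<alpha> \<beta> n k l h =
     pochhammer (real n - real h - 1) 2 * pochhammer (real h + 1 - real k) 2
     / (pochhammer (real n - real l - real h - 1) 2 * pochhammer (real h + 1) 2)
     * HH \<alpha> \<beta> n k l h"

end

theory Submission
  imports Defs
begin

text \<open>Hahn polynomials satisfy the second order difference equation
  \<open>(x+a+1)(x-N) \<Delta>Q(x) - x(x-b-N-1) \<nabla>Q(x) = m(m+a+b+1) Q(x)\<close>,
  which is a three-term recurrence in \<open>x\<close>, i.e. in \<open>h\<close>. The ratios of consecutive binomial
  weights produce the prefactors of \<open>F\<^sub>i\<close> and \<open>G\<close>. The two starting values come from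
  \<open>Q\<^sub>m(0) = 1\<close> and from the recurrence at \<open>x = 0\<close>, where the \<open>\<nabla>\<close>-term vanishes.\<close>

definition hahn_coeff :: "nat \<Rightarrow> real \<Rightarrow> real \<Rightarrow> nat \<Rightarrow> nat \<Rightarrow> real" where
  "hahn_coeff m a b N j = pochhammer (- real m) j * pochhammer (real m + a + b + 1) j
     / (fact j * pochhammer (a + 1) j * pochhammer (- real N) j)"

lemma hahnQ_eq_sum_coeff: "hahnQ m x a b N = (\<Sum>j\<le>m. hahn_coeff m a b N j * pochhammer (- x) j)"
  unfolding hahnQ_def hahn_coeff_def by (simp add: mult_ac)

lemma hahn_coeff_Suc:
  assumes "j < m" "m \<le> N" "a > -1"
  shows "hahn_coeff m a b N (Suc j) * ((real j + 1) * (a + real j + 1) * (real N - real j))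
       = (real m - real j) * (real j + real m + a + b + 1) * hahn_coeff m a b N j"
proof -
  have "pochhammer (a + 1) j \<noteq> 0" "pochhammer (- real N) j \<noteq> 0"
    "a + 1 + real j \<noteq> 0" "- real N + real j \<noteq> 0"
    using assms by (auto simp: pochhammer_eq_0_iff)
  then show ?thesis
    unfolding hahn_coeff_def pochhammer_rec' fact_Suc
    by (simp add: divide_simps) (simp add: algebra_simps)
qed

lemma pochhammer_neg_diff:
  fixes x :: "'a::comm_ring_1"
  shows "pochhammer (- (x + 1)) j - pochhammer (- x) j = - of_nat j * pochhammer (- x) (j - 1)"
proof (cases j)
  case (Suc i)
  have "pochhammer (- (x + 1)) (Suc i) = (- x - 1) * pochhammer (- x) i"
    by (simp add: pochhammer_rec algebra_simps)
  moreover have "pochhammer (- x) (Suc i) = (- x + of_nat i) * pochhammer (- x) i"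
    by (rule pochhammer_rec')
  ultimately show ?thesis
    unfolding Suc by (simp only:) (simp add: algebra_simps)
qed simp

lemma hahn_basis_difference:
  fixes x a b :: real
  shows "(x + a + 1) * (x - real N) * (pochhammer (- (x + 1)) j - pochhammer (- x) j)
         - x * (x - b - real N - 1) * (pochhammer (- x) j - pochhammer (- (x - 1)) j)
       = real j * (real j + a + b + 1) * pochhammer (- x) j
         + real j * (a + real j) * (real N - real j + 1) * pochhammer (- x) (j - 1)"
proof (cases j)
  case (Suc i)
  define P where "P = pochhammer (- x) i"
  have Pj: "pochhammer (- x) j = (- x + real i) * P"
    using Suc by (simp add: P_def pochhammer_rec')
  have forward: "pochhammer (- (x + 1)) j - pochhammer (- x) j = - real j * P"
    using pochhammer_neg_diff[of x j] Suc by (simp add: P_def)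
  have nabla: "pochhammer (- x) j - pochhammer (- (x - 1)) j = - real j * pochhammer (1 - x) i"
    using pochhammer_neg_diff[of "x - 1" j] Suc by simp
  have shift: "x * pochhammer (1 - x) i = - pochhammer (- x) j"
    using Suc by (simp add: pochhammer_rec add.commute)
  have "x * (x - b - real N - 1) * (pochhammer (- x) j - pochhammer (- (x - 1)) j)
      = (x - b - real N - 1) * (- real j) * (x * pochhammer (1 - x) i)"
    unfolding nabla by (simp only: mult_ac)
  also have "\<dots> = (x - b - real N - 1) * real j * ((- x + real i) * P)"
    unfolding shift Pj by simp
  finally have backward: "x * (x - b - real N - 1) * (pochhammer (- x) j - pochhammer (- (x - 1)) j)
      = (x - b - real N - 1) * real j * ((- x + real i) * P)" .
  show ?thesis
    unfolding forward backward unfolding Pj using Suc by (simp add: P_def[symmetric] algebra_simps)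
qed simp

lemma hahnQ_difference_equation:
  assumes "m \<le> N" "a > -1"
  shows "(x + a + 1) * (x - real N) * (hahnQ m (x + 1) a b N - hahnQ m x a b N)
         - x * (x - b - real N - 1) * (hahnQ m x a b N - hahnQ m (x - 1) a b N)
       = real m * (real m + a + b + 1) * hahnQ m x a b N"
proof -
  define A where "A = hahn_coeff m a b N"
  define F where "F j = A j * (real j * (a + real j) * (real N - real j + 1) * pochhammer (- x) (j - 1))"
    for j
  have "(\<Sum>j\<le>m. F j) = (\<Sum>j<m. F (Suc j))"
    unfolding lessThan_Suc_atMost[symmetric] sum.lessThan_Suc_shift by (simp add: F_def)
  also have "\<dots> = (\<Sum>j<m. (real m - real j) * (real j + real m + a + b + 1) * A j * pochhammer (- x) j)"
  proof (rule sum.cong)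
    fix j assume "j \<in> {..<m}"
    then have "j < m" by simp
    have "F (Suc j) = A (Suc j) * ((real j + 1) * (a + real j + 1) * (real N - real j)) * pochhammer (- x) j"
      by (simp add: F_def algebra_simps)
    then show "F (Suc j) = (real m - real j) * (real j + real m + a + b + 1) * A j * pochhammer (- x) j"
      unfolding A_def hahn_coeff_Suc[OF \<open>j < m\<close> assms] .
  qed simp
  also have "\<dots> = (\<Sum>j\<le>m. (real m - real j) * (real j + real m + a + b + 1) * A j * pochhammer (- x) j)"
    by (simp add: lessThan_Suc_atMost[symmetric])
  finally have shifted: "(\<Sum>j\<le>m. F j)
      = (\<Sum>j\<le>m. (real m - real j) * (real j + real m + a + b + 1) * A j * pochhammer (- x) j)" .
  have "(x + a + 1) * (x - real N) * (hahnQ m (x + 1) a b N - hahnQ m x a b N)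
         - x * (x - b - real N - 1) * (hahnQ m x a b N - hahnQ m (x - 1) a b N)
      = (\<Sum>j\<le>m. A j * ((x + a + 1) * (x - real N) * (pochhammer (- (x + 1)) j - pochhammer (- x) j)
           - x * (x - b - real N - 1) * (pochhammer (- x) j - pochhammer (- (x - 1)) j)))"
    unfolding hahnQ_eq_sum_coeff A_def
    by (simp add: sum_distrib_left sum_subtractf[symmetric] algebra_simps)
  also have "\<dots> = (\<Sum>j\<le>m. real j * (real j + a + b + 1) * A j * pochhammer (- x) j) + (\<Sum>j\<le>m. F j)"
    unfolding hahn_basis_difference sum.distrib[symmetric] F_def by (simp add: algebra_simps)
  also have "\<dots> = (\<Sum>j\<le>m. real m * (real m + a + b + 1) * (A j * pochhammer (- x) j))"
    unfolding shifted sum.distrib[symmetric] by (rule sum.cong) (simp_all add: algebra_simps)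
  also have "\<dots> = real m * (real m + a + b + 1) * hahnQ m x a b N"
    unfolding hahnQ_eq_sum_coeff A_def by (simp add: sum_distrib_left)
  finally show ?thesis .
qed

lemma hahnQ_three_term_recurrence:
  assumes "m \<le> N" "a > -1" "(x + a + 1) * (x - real N) \<noteq> 0"
  shows "hahnQ m (x + 1) a b N =
      (1 + (x * (x - b - real N - 1) + real m * (real m + a + b + 1)) / ((x + a + 1) * (x - real N)))
        * hahnQ m x a b N
      - x * (x - b - real N - 1) / ((x + a + 1) * (x - real N)) * hahnQ m (x - 1) a b N"
proof -
  define B where "B = (x + a + 1) * (x - real N)"
  define D where "D = x * (x - b - real N - 1)"
  define E where "E = real m * (real m + a + b + 1)"
  have B: "B \<noteq> 0"
    using assms(3) by (simp add: B_def)
  have "B * hahnQ m (x + 1) a b N = (B + D + E) * hahnQ m x a b N - D * hahnQ m (x - 1) a b N"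
    using hahnQ_difference_equation[OF assms(1,2), of x b]
    unfolding B_def D_def E_def by (simp add: algebra_simps)
  then have "hahnQ m (x + 1) a b N = ((B + D + E) * hahnQ m x a b N - D * hahnQ m (x - 1) a b N) / B"
    using B by (simp add: field_simps)
  also have "\<dots> = (1 + (D + E) / B) * hahnQ m x a b N - D / B * hahnQ m (x - 1) a b N"
    using B by (simp add: field_simps)
  finally show ?thesis
    unfolding B_def D_def E_def .
qed

lemma hahnQ_at_0: "hahnQ m 0 a b N = 1"
proof -
  have "hahnQ m 0 a b N = (\<Sum>j\<le>m. if j = 0 then hahn_coeff m a b N j else 0)"
    unfolding hahnQ_eq_sum_coeff by (rule sum.cong) (simp_all add: pochhammer_0_left)
  then show ?thesis by (simp add: hahn_coeff_def)
qed

lemma hahnQ_at_1: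
  assumes "m \<le> N" "0 < N" "a > -1"
  shows "hahnQ m 1 a b N = 1 - real m * (real m + a + b + 1) / ((a + 1) * real N)"
proof -
  have "(0 + a + 1) * (0 - real N) \<noteq> 0"
    using assms by simp
  from hahnQ_three_term_recurrence[OF assms(1,3) this, of b] show ?thesis
    by (simp add: hahnQ_at_0)
qed

lemma of_nat_binomial_Suc:
  assumes "k \<le> n"
  shows "real (n choose Suc k) * (real k + 1) = (real n - real k) * real (n choose k)"
proof -
  have "Suc k * (n choose Suc k) = (n - k) * (n choose k)"
    by (metis binomial_absorption binomial_absorb_comp)
  then have "real (Suc k * (n choose Suc k)) = real ((n - k) * (n choose k))"
    by (simp only:)
  with assms show ?thesis
    by (simp add: algebra_simps)
qed

definition binom_weight :: "nat \<Rightarrow> nat \<Rightarrow> nat \<Rightarrow> nat \<Rightarrow> real" where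
  "binom_weight n k l h = real ((n - k - l) choose (h - k)) / real (n choose h)"

definition weight_ratio :: "nat \<Rightarrow> nat \<Rightarrow> nat \<Rightarrow> nat \<Rightarrow> real" where
  "weight_ratio n k l h =
     (real n - real h) * (real h + 1 - real k) / ((real n - real l - real h) * (real h + 1))"

lemma binom_weight_step:
  assumes "k \<le> h" "h + 1 \<le> n - l"
  shows "binom_weight n k l h = weight_ratio n k l h * binom_weight n k l (h + 1)"
proof -
  define N where "N = n - k - l"
  define x where "x = real n - real l - real h"
  have "h - k \<le> N" "h \<le> n"
    using assms by (simp_all add: N_def)
  from of_nat_binomial_Suc[OF this(1)] of_nat_binomial_Suc[OF this(2)]
  have top: "(real h + 1 - real k) * real (N choose (h + 1 - k)) = x * real (N choose (h - k))"
    and bottom: "(real h + 1) * real (n choose (h + 1)) = (real n - real h) * real (n choose h)"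
    using assms by (simp_all add: N_def x_def Suc_diff_le of_nat_diff algebra_simps)
  have "x \<noteq> 0" "real n - real h \<noteq> 0"
    using assms by (simp_all add: x_def)
  have "weight_ratio n k l h * binom_weight n k l (h + 1)
      = (real n - real h) * ((real h + 1 - real k) * real (N choose (h + 1 - k)))
        / (x * ((real h + 1) * real (n choose (h + 1))))"
    unfolding weight_ratio_def binom_weight_def N_def[symmetric] x_def[symmetric] by simp
  also have "\<dots> = binom_weight n k l h"
    unfolding top bottom binom_weight_def N_def[symmetric] using \<open>x \<noteq> 0\<close> \<open>real n - real h \<noteq> 0\<close>
    by (simp add: mult.left_commute[of x])
  finally show ?thesis ..
qed

lemma GG_eq_weight_ratio:
  "GG \<alpha> \<beta> n k l h = weight_ratio n k l h * weight_ratio n k l (h + 1) * HH \<alpha> \<beta> n k l h"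
proof -
  have pochhammer_2: "pochhammer y 2 = y * (y + 1)" for y :: real
    by (simp add: numeral_2_eq_2 pochhammer_Suc)
  show ?thesis
    unfolding GG_def weight_ratio_def pochhammer_2 times_divide_times_eq
    by (simp add: algebra_simps)
qed

lemma cc_eq_binom_weight:
  "cc \<alpha> \<beta> n k l i h = pochhammer (\<alpha> + 2 * real l + 1) (i - k - l) / fact (i - k - l)
     * binom_weight n k l h
     * hahnQ (i - k - l) (real (n - l - h)) (\<alpha> + 2 * real l) (\<beta> + 2 * real k) (n - k - l)"
  unfolding cc_def binom_weight_def by simp

lemma cc_top:
  assumes "k + l \<le> n"
  shows "cc \<alpha> \<beta> n k l i (n - l) =
           pochhammer (\<alpha> + 2 * real l + 1) (i - k - l) / fact (i - k - l) * (1 / real (n choose l))"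
proof -
  have "binom_weight n k l (n - l) = 1 / real (n choose l)"
    using assms binomial_symmetric[of l n] by (simp add: binom_weight_def add.commute)
  then show ?thesis
    by (simp add: cc_eq_binom_weight hahnQ_at_0)
qed

lemma cc_below_top:
  assumes "k + l + 1 \<le> n" "\<alpha> > -1" "k + l \<le> i" "i \<le> n"
  shows "cc \<alpha> \<beta> n k l i (n - l - 1) =
           cc \<alpha> \<beta> n k l i (n - l) * ((real n - real k - real l) * (real l + 1) / (real n - real l))
           * (1 - (real k + real l - real i) * (real i + real k + real l + (\<alpha> + \<beta> + 1))
                  / ((real k + real l - real n) * (\<alpha> + 2 * real l + 1)))"
proof -
  define P where "P = pochhammer (\<alpha> + 2 * real l + 1) (i - k - l) / fact (i - k - l)"
  define m where "m = i - k - l"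
  define N where "N = n - k - l"
  define a where "a = \<alpha> + 2 * real l"
  define b where "b = \<beta> + 2 * real k"
  define r where "r = (real n - real k - real l) * (real l + 1) / (real n - real l)"
  define T where "T = (real k + real l - real i) * (real i + real k + real l + (\<alpha> + \<beta> + 1))
                  / ((real k + real l - real n) * (\<alpha> + 2 * real l + 1))"
  have ratio: "weight_ratio n k l (n - l - 1) = r"
    using assms by (simp add: weight_ratio_def r_def of_nat_diff algebra_simps)
  have "n - l - 1 + 1 = n - l"
    using assms by simp
  with binom_weight_step[of k "n - l - 1" n l] assms
  have weight: "binom_weight n k l (n - l - 1) = r * binom_weight n k l (n - l)"
    unfolding ratio by simp
  have "(real k + real l - real i) * (real i + real k + real l + (\<alpha> + \<beta> + 1))
          = - (real m * (real m + a + b + 1))"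
       "(real k + real l - real n) * (\<alpha> + 2 * real l + 1) = - ((a + 1) * real N)"
    using assms by (simp_all add: m_def N_def a_def b_def of_nat_diff algebra_simps)
  then have "hahnQ m 1 a b N = 1 - T"
    using hahnQ_at_1[of m N a b] assms by (simp add: T_def m_def N_def a_def)
  moreover have "real (n - l - (n - l - 1)) = 1"
    using assms by simp
  ultimately have "cc \<alpha> \<beta> n k l i (n - l - 1) = P * (r * binom_weight n k l (n - l)) * (1 - T)"
    unfolding cc_eq_binom_weight weight P_def m_def N_def a_def b_def by simp
  also have "\<dots> = cc \<alpha> \<beta> n k l i (n - l) * r * (1 - T)"
    by (simp add: cc_eq_binom_weight hahnQ_at_0 P_def)
  finally show ?thesis
    unfolding r_def T_def .
qed

lemma cc_recurrence:
  assumes "\<alpha> > -1" "k + l \<le> i" "i \<le> n" "k \<le> h" "h + 2 \<le> n - l"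
  shows "cc \<alpha> \<beta> n k l i h =
           FF \<alpha> \<beta> n k l i h * cc \<alpha> \<beta> n k l i (h + 1) + GG \<alpha> \<beta> n k l h * cc \<alpha> \<beta> n k l i (h + 2)"
proof -
  define P where "P = pochhammer (\<alpha> + 2 * real l + 1) (i - k - l) / fact (i - k - l)"
  define m where "m = i - k - l"
  define N where "N = n - k - l"
  define a where "a = \<alpha> + 2 * real l"
  define b where "b = \<beta> + 2 * real k"
  define y where "y = real n - real l - real h - 1"
  define Q where "Q t = hahnQ m t a b N" for t
  define W where "W = P * binom_weight n k l (h + 1)"
  define H where "H = HH \<alpha> \<beta> n k l h"
  define T where "T = (real k + real l - real i) * (real i + real k + real l + (\<alpha> + \<beta> + 1))
                      / ((real n + real l + \<alpha> - real h) * (real k - real h - 1))"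
  have shift: "real (n - l - h) = y + 1" "real (n - l - (h + 1)) = y" "real (n - l - (h + 2)) = y - 1"
    using assms by (simp_all add: y_def of_nat_diff)
  have cc0: "cc \<alpha> \<beta> n k l i h = weight_ratio n k l h * W * Q (y + 1)"
    unfolding cc_eq_binom_weight shift using binom_weight_step[of k h n l] assms
    by (simp add: W_def P_def Q_def m_def N_def a_def b_def)
  have cc1: "cc \<alpha> \<beta> n k l i (h + 1) = W * Q y"
    unfolding cc_eq_binom_weight shift by (simp add: W_def P_def Q_def m_def N_def a_def b_def)
  have cc2: "weight_ratio n k l (h + 1) * cc \<alpha> \<beta> n k l i (h + 2) = W * Q (y - 1)"
    unfolding cc_eq_binom_weight shift using binom_weight_step[of k "h + 1" n l] assms
    by (simp add: W_def P_def Q_def m_def N_def a_def b_def)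
  have B: "(y + a + 1) * (y - real N) = (real n + real l + \<alpha> - real h) * (real k - real h - 1)"
    using assms by (simp add: y_def a_def N_def of_nat_diff algebra_simps)
  have "y + a + 1 > 0" "y - real N < 0"
    using assms by (simp_all add: y_def a_def N_def of_nat_diff)
  then have "(y + a + 1) * (y - real N) \<noteq> 0"
    by (simp add: mult_pos_neg)
  from hahnQ_three_term_recurrence[OF _ _ this, of m b]
  have rec: "Q (y + 1) = (1 - H - T) * Q y + H * Q (y - 1)"
    unfolding B
    using assms by (simp add: Q_def H_def T_def HH_def m_def N_def a_def b_def y_def of_nat_diff
        add_divide_distrib diff_divide_distrib algebra_simps)
  have "cc \<alpha> \<beta> n k l i h
      = weight_ratio n k l h * (1 - H - T) * (W * Q y) + weight_ratio n k l h * H * (W * Q (y - 1))"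
    unfolding cc0 rec by (simp add: algebra_simps)
  also have "\<dots> = FF \<alpha> \<beta> n k l i h * cc \<alpha> \<beta> n k l i (h + 1) + GG \<alpha> \<beta> n k l h * cc \<alpha> \<beta> n k l i (h + 2)"
    unfolding cc1 cc2[symmetric] GG_eq_weight_ratio H_def T_def
    by (simp add: FF_def weight_ratio_def)
  finally show ?thesis .
qed

theorem theorem1:
  fixes n k l i :: nat and \<alpha> \<beta> :: real
  assumes "k + l \<le> n" and "\<alpha> > -1" and "\<beta> > -1"
    and "k + l \<le> i" and "i \<le> n"
  shows "(cc \<alpha> \<beta> n k l i (n - l) =
           pochhammer (\<alpha> + 2 * real l + 1) (i - k - l) / fact (i - k - l) * (1 / real (n choose l)))
    \<and> (k + l + 1 \<le> n \<longrightarrow>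
         cc \<alpha> \<beta> n k l i (n - l - 1) =
           cc \<alpha> \<beta> n k l i (n - l) * ((real n - real k - real l) * (real l + 1) / (real n - real l))
           * (1 - (real k + real l - real i) * (real i + real k + real l + (\<alpha> + \<beta> + 1))
                  / ((real k + real l - real n) * (\<alpha> + 2 * real l + 1))))
    \<and> (\<forall>h. k \<le> h \<longrightarrow> h + 2 \<le> n - l \<longrightarrow>
         cc \<alpha> \<beta> n k l i h =
           FF \<alpha> \<beta> n k l i h * cc \<alpha> \<beta> n k l i (h + 1) + GG \<alpha> \<beta> n k l h * cc \<alpha> \<beta> n k l i (h + 2))"
  using assms by (intro conjI allI impI cc_top cc_below_top cc_recurrence) simp_all

end
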